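(* Let $G=(V,E)$ be a graph with $n=|V|$, $m=|E|$, and a proper vertex coloring $c:V\to[q]$, and let $G'$ be the threshold graph constructed from $(G,q)$ as described in the context. Then $G$ contains a clique of size $q$ if and only if there exists $Y\subseteq V(G')$ with $|Y|\le \ell$ and $|D_{G',Y}|\le k$, where $k=(n-q)(2nq-2n+1)+\left(m-\binom{q}{2}\right)(4n+1)$ and $\ell=q+\binom{q}{2}$.
   Context: Diffusion: for a threshold graph $H=(V,E,t)$ with $t:V\to\mathbb{N}$ and $Y\subseteq V$, $D_{H,Y}[1]=\{u\in V\setminus Y: t(u)=0\}$, $D_{H,Y}[\tau]=D_{H,Y}[\tau-1]\cup\{u\in V\setminus Y: |\Gamma_H(u)\cap D_{H,Y}[\tau-1]|\ge t(u)\}$, and $D_{H,Y}$ is the final stable set. Construction of $G'$: let $V_c$ be the nodes of color $c$ and, for distinct $c,d$, $E_{cd}$ the edges between $V_c$ and $V_d$. A parallel-paths gadget of size $h$ between nodes $x,y$ consists of $h$ new "connection" nodes, each adjacent exactly to $x$ and $y$. For each $c\in[q]$ add a node $x_v$ for each $v\in V_c$ (node-selection nodes) and a guard node $g_c$ adjacent to all these $x_v$. For each unordered pair $\{c,d\}$ of distinct colors add a node $x_{u,v}$ for each edge $(u,v)\in E_{cd}$ (edge-selection nodes) and a guard node $g_{cd}$ adjacent to all of them. Assign to each $v\in V$ a distinct $low(v)\in[n]$ and set $high(v)=2n-low(v)$. For each unordered pair $\{c,d\}$ and each of its two colors, say $c$, add two validation nodes $\alpha,\beta$: $\alpha$ is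 joined to each $x_v$ ($v\in V_c$) by a parallel-paths gadget of size $high(v)$ and to each $x_{u,v}$ with $(u,v)\in E_{cd}$, $v\in V_c$, by a parallel-paths gadget of size $low(v)$; $\beta$ is joined to each such $x_v$ by size $low(v)$ and to each such $x_{u,v}$ by size $high(v)$ (symmetrically for color $d$). Finally add a set $B$ of $(n-q)(2nq-2n+1)+\left(m-\binom q2\right)(4n+1)$ independent nodes, each adjacent to every guard node. Thresholds: $0$ for selection nodes; $1$ for connection nodes and nodes of $B$; $d_{G'}(x)-2n+1$ for each validation node $x$; $|V_c|$ for $g_c$; $|E_{cd}|$ for $g_{cd}$. *)

theory Defs
  imports Main
begin

definition nbrs :: "'b set \<Rightarrow> ('b \<Rightarrow> 'b \<Rightarrow> bool) \<Rightarrow> 'b \<Rightarrow> 'b set" where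
  "nbrs VV adj u = {w \<in> VV. adj u w}"

text \<open>diff_stage VV adj t Y tau is the set D_{H,Y}[tau+1] of the paper
(index 0 corresponds to D[1]).\<close>

primrec diff_stage ::
  "'b set \<Rightarrow> ('b \<Rightarrow> 'b \<Rightarrow> bool) \<Rightarrow> ('b \<Rightarrow> nat) \<Rightarrow> 'b set \<Rightarrow> nat \<Rightarrow> 'b set" where
  "diff_stage VV adj t Y 0 = {u \<in> VV - Y. t u = 0}"
| "diff_stage VV adj t Y (Suc tau) =
     diff_stage VV adj t Y tau \<union>
     {u \<in> VV - Y. card (nbrs VV adj u \<inter> diff_stage VV adj t Y tau) \<ge> t u}"

definition diffusion ::
  "'b set \<Rightarrow> ('b \<Rightarrow> 'b \<Rightarrow> bool) \<Rightarrow> ('b \<Rightarrow> nat) \<Rightarrow> 'b set \<Rightarrow> 'b set" where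
  "diffusion VV adj t Y = (\<Union>tau. diff_stage VV adj t Y tau)"

definition is_clique :: "'a set set \<Rightarrow> 'a set \<Rightarrow> bool" where
  "is_clique E K \<longleftrightarrow> (\<forall>u\<in>K. \<forall>v\<in>K. u \<noteq> v \<longrightarrow> {u, v} \<in> E)"

text \<open>Nodes of G':
  XV v            node-selection node x_v
  GC c            guard node g_c
  XE e            edge-selection node x_{u,v} for the edge e = {u,v}
  GE P            guard node g_{cd} for the colour pair P = {c,d}
  Val P c b       validation node for pair P and colour c in P (b = True: alpha, False: beta)
  Conn P c b x i  i-th connection node of the parallel-paths gadget between Val P c b and x
  BN i            i-th node of the set B\<close>

datatype 'a node =
    XV 'a | GC nat | XE "'a set" | GE "nat set"
  | Val "nat set" nat bool | Conn "nat set" nat bool "'a node" nat | BN nat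

definition colpairs :: "nat \<Rightarrow> nat set set" where
  "colpairs q = {{c, d} | c d. c \<in> {1..q} \<and> d \<in> {1..q} \<and> c \<noteq> d}"

definition Ecd :: "'a set set \<Rightarrow> ('a \<Rightarrow> nat) \<Rightarrow> nat set \<Rightarrow> 'a set set" where
  "Ecd E col P = {e \<in> E. col ` e = P}"

definition highv :: "nat \<Rightarrow> ('a \<Rightarrow> nat) \<Rightarrow> 'a \<Rightarrow> nat" where
  "highv n low v = 2 * n - low v"

definition validx :: "nat \<Rightarrow> (nat set \<times> nat \<times> bool) set" where
  "validx q = {(P, c, b) | P c b. P \<in> colpairs q \<and> c \<in> P}"

text \<open>Selection nodes attached to the validation nodes of (P, c), together with
  the vertex v of colour c that determines the gadget size.\<close>
definition gad_attach ::
  "'a set \<Rightarrow> 'a set set \<Rightarrow> ('a \<Rightarrow> nat) \<Rightarrow> nat set \<Rightarrow> nat \<Rightarrow> ('a node \<times> 'a) set" where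
  "gad_attach V E col P c =
     {(XV v, v) | v. v \<in> V \<and> col v = c} \<union>
     {(XE e, v) | e v. e \<in> Ecd E col P \<and> v \<in> e \<and> col v = c}"

definition gad_size :: "nat \<Rightarrow> ('a \<Rightarrow> nat) \<Rightarrow> bool \<Rightarrow> 'a node \<Rightarrow> 'a \<Rightarrow> nat" where
  "gad_size n low b x v =
     (case x of XV _ \<Rightarrow> (if b then highv n low v else low v)
              | _ \<Rightarrow> (if b then low v else highv n low v))"

definition connodes ::
  "'a set \<Rightarrow> 'a set set \<Rightarrow> ('a \<Rightarrow> nat) \<Rightarrow> nat \<Rightarrow> ('a \<Rightarrow> nat) \<Rightarrow> 'a node set" where
  "connodes V E col q low =
     {Conn P c b x i | P c b x v i.
        (P, c, b) \<in> validx q \<and> (x, v) \<in> gad_attach V E col P c \<and>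
        i < gad_size (card V) low b x v}"

definition kval :: "'a set \<Rightarrow> 'a set set \<Rightarrow> nat \<Rightarrow> int" where
  "kval V E q =
     (int (card V) - int q) * (2 * int (card V) * int q - 2 * int (card V) + 1) +
     (int (card E) - int (q choose 2)) * (4 * int (card V) + 1)"

definition lval :: "nat \<Rightarrow> nat" where
  "lval q = q + (q choose 2)"

definition Bnodes :: "'a set \<Rightarrow> 'a set set \<Rightarrow> nat \<Rightarrow> 'a node set" where
  "Bnodes V E q = {BN i | i. i < nat (kval V E q)}"

definition guards :: "'a set set \<Rightarrow> nat \<Rightarrow> 'a node set" where
  "guards E q = GC ` {1..q} \<union> GE ` colpairs q"

definition Gp_V ::
  "'a set \<Rightarrow> 'a set set \<Rightarrow> ('a \<Rightarrow> nat) \<Rightarrow> nat \<Rightarrow> ('a \<Rightarrow> nat) \<Rightarrow> 'a node set" where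
  "Gp_V V E col q low =
     XV ` V \<union> XE ` E \<union> guards E q \<union> (\<lambda>(P, c, b). Val P c b) ` validx q \<union> connodes V E col q low \<union> Bnodes V E q"

definition Gp_E ::
  "'a set \<Rightarrow> 'a set set \<Rightarrow> ('a \<Rightarrow> nat) \<Rightarrow> nat \<Rightarrow> ('a \<Rightarrow> nat) \<Rightarrow> ('a node \<times> 'a node) set" where
  "Gp_E V E col q low =
     {(GC c, XV v) | c v. c \<in> {1..q} \<and> v \<in> V \<and> col v = c}
   \<union> {(GE P, XE e) | P e. P \<in> colpairs q \<and> e \<in> Ecd E col P}
   \<union> {(Conn P c b x i, Val P c b) | P c b x i. Conn P c b x i \<in> connodes V E col q low}
   \<union> {(Conn P c b x i, x) | P c b x i. Conn P c b x i \<in> connodes V E col q low}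
   \<union> {(BN i, g) | i g. BN i \<in> Bnodes V E q \<and> g \<in> guards E q}"

definition Gp_adj ::
  "'a set \<Rightarrow> 'a set set \<Rightarrow> ('a \<Rightarrow> nat) \<Rightarrow> nat \<Rightarrow> ('a \<Rightarrow> nat) \<Rightarrow> 'a node \<Rightarrow> 'a node \<Rightarrow> bool" where
  "Gp_adj V E col q low u w \<longleftrightarrow>
     (u, w) \<in> Gp_E V E col q low \<or> (w, u) \<in> Gp_E V E col q low"

text \<open>For validation nodes the paper's value d(x) - 2n + 1 is taken
  with truncation at 0 (a non-positive threshold means the node is activated
  whenever it is not blocked, exactly as threshold 0).\<close>
definition Gp_t ::
  "'a set \<Rightarrow> 'a set set \<Rightarrow> ('a \<Rightarrow> nat) \<Rightarrow> nat \<Rightarrow> ('a \<Rightarrow> nat) \<Rightarrow> 'a node \<Rightarrow> nat" where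
  "Gp_t V E col q low u =
     (case u of
        XV _ \<Rightarrow> 0
      | XE _ \<Rightarrow> 0
      | Conn _ _ _ _ _ \<Rightarrow> 1
      | BN _ \<Rightarrow> 1
      | Val _ _ _ \<Rightarrow>
          card (nbrs (Gp_V V E col q low) (Gp_adj V E col q low) u) + 1 - 2 * card V
      | GC c \<Rightarrow> card {v \<in> V. col v = c}
      | GE P \<Rightarrow> card (Ecd E col P))"

end

theory Submission
  imports Defs "HOL-Library.Disjoint_Sets"
begin

text \<open>
  Each guard of G', together with its selection neighbours, forms a group; the \<ell> groups
  are pairwise disjoint.

  If K is a q-clique, block the selection nodes of K and of its edges. Then exactly the other
  selection nodes and their connection nodes diffuse, k nodes in all: every guard keeps a blocked
  neighbour, and every validation node has two whole gadgets, of sizes summing to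
  high(v) + low(v) = 2n, attached to blocked nodes.

  Conversely, let Y be a blocking set within budget. If some group were unblocked, its guard would
  fire and take all of B with it; the budget then forces every selection node into Y, one per group,
  so that n \<le> q, m \<le> binom q 2 and n + m < \<ell>, which makes k negative. Hence Y meets every
  group, and then exactly once: Y chooses one vertex per colour and one edge per colour pair. The
  free selection nodes with their connection nodes already number k, so no validation node may
  fire. But if a chosen edge had an endpoint x of colour c other than the chosen vertex u, the
  validation node for the colour pair of the edge and colour c would see only
  high(u) + low(x) or low(u) + high(x) < 2n blocked gadget nodes, and fire. So the chosen edges
  join chosen vertices, which therefore form a q-clique.
\<close>

section \<open>Diffusion in threshold graphs\<close>

lemma diff_stage_mono:
  assumes "tau \<le> tau'"
  shows "diff_stage VV adj t Y tau \<subseteq> diff_stage VV adj t Y tau'"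
  by (rule lift_Suc_mono_le[OF _ assms]) auto

lemma diff_stage_subset: "diff_stage VV adj t Y tau \<subseteq> VV - Y"
  by (induction tau) auto

lemma diffusion_subset: "diffusion VV adj t Y \<subseteq> VV - Y"
  unfolding diffusion_def by (rule UN_least) (rule diff_stage_subset)

lemma diffusion_if_threshold_0: "u \<in> VV - Y \<Longrightarrow> t u = 0 \<Longrightarrow> u \<in> diffusion VV adj t Y"
  unfolding diffusion_def by (rule UN_I[of 0]) auto

lemma finite_subset_diff_stage:
  assumes "finite A" "A \<subseteq> diffusion VV adj t Y"
  shows "\<exists>tau. A \<subseteq> diff_stage VV adj t Y tau"
  using assms
proof (induction A rule: finite_induct)
  case empty then show ?case by blast
next
  case (insert x A)
  then obtain tau1 tau2 where "A \<subseteq> diff_stage VV adj t Y tau1" "x \<in> diff_stage VV adj t Y tau2"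
    unfolding diffusion_def by blast
  then have "insert x A \<subseteq> diff_stage VV adj t Y (max tau1 tau2)"
    using diff_stage_mono[of tau1 "max tau1 tau2" VV adj t Y]
      diff_stage_mono[of tau2 "max tau1 tau2" VV adj t Y] by auto
  then show ?case by blast
qed

lemma diffusion_if_active_nbrs:
  assumes "finite VV" "u \<in> VV - Y" "A \<subseteq> nbrs VV adj u" "A \<subseteq> diffusion VV adj t Y"
    and "t u \<le> card A"
  shows "u \<in> diffusion VV adj t Y"
proof -
  have fin: "finite (nbrs VV adj u)" using assms(1) unfolding nbrs_def by simp
  obtain tau where tau: "A \<subseteq> diff_stage VV adj t Y tau"
    using finite_subset_diff_stage[OF finite_subset[OF assms(3) fin] assms(4)] by blast
  have "card A \<le> card (nbrs VV adj u \<inter> diff_stage VV adj t Y tau)"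
    using fin tau assms(3) by (intro card_mono) auto
  then have "u \<in> diff_stage VV adj t Y (Suc tau)" using assms(2,5) by auto
  then show ?thesis unfolding diffusion_def by blast
qed

lemma diffusion_subset_if_closed:
  assumes "finite VV" and closed: "\<And>u. u \<in> VV - Y - S \<Longrightarrow> card (nbrs VV adj u \<inter> S) < t u"
  shows "diffusion VV adj t Y \<subseteq> S"
proof -
  have "diff_stage VV adj t Y tau \<subseteq> S" for tau
  proof (induction tau)
    case 0 show ?case using closed by fastforce
  next
    case (Suc tau)
    show ?case
    proof
      fix u assume u: "u \<in> diff_stage VV adj t Y (Suc tau)"
      show "u \<in> S"
      proof (rule ccontr)
        assume "u \<notin> S"
        with u Suc.IH have "u \<in> VV - Y - S"
          and "t u \<le> card (nbrs VV adj u \<inter> diff_stage VV adj t Y tau)" by auto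
        moreover have "card (nbrs VV adj u \<inter> diff_stage VV adj t Y tau) \<le> card (nbrs VV adj u \<inter> S)"
          using Suc.IH assms(1) by (intro card_mono) (auto simp: nbrs_def)
        ultimately show False using closed by fastforce
      qed
    qed
  qed
  then show ?thesis unfolding diffusion_def by blast
qed

section \<open>Hitting sets of disjoint families\<close>

lemma card_Int_UN_disjoint:
  assumes "finite Y" "finite I" "disjoint_family_on G I"
  shows "card (Y \<inter> \<Union>(G ` I)) = (\<Sum>i\<in>I. card (Y \<inter> G i))"
proof -
  have "card (Y \<inter> \<Union>(G ` I)) = card (\<Union>i\<in>I. Y \<inter> G i)"
    by (simp only: Int_UN_distrib)
  also have "\<dots> = (\<Sum>i\<in>I. card (Y \<inter> G i))"
    using assms by (intro card_UN_disjoint) (auto simp: disjoint_family_on_def)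
  finally show ?thesis .
qed

lemma card_le_card_hitting_set:
  assumes "finite Y" "finite I" "disjoint_family_on G I" "\<And>i. i \<in> I \<Longrightarrow> Y \<inter> G i \<noteq> {}"
  shows "card I \<le> card (Y \<inter> \<Union>(G ` I))"
proof -
  have "card I = (\<Sum>i\<in>I. 1)" by simp
  also have "\<dots> \<le> (\<Sum>i\<in>I. card (Y \<inter> G i))"
    using assms(1,4) by (intro sum_mono) (simp add: Suc_le_eq card_gt_0_iff)
  finally show ?thesis using card_Int_UN_disjoint[OF assms(1,2,3)] by simp
qed

lemma card_tight_hitting_set:
  assumes "finite Y" "finite I" "disjoint_family_on G I" "\<And>i. i \<in> I \<Longrightarrow> Y \<inter> G i \<noteq> {}"
    and "card (Y \<inter> \<Union>(G ` I)) \<le> card I" "i \<in> I"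
  shows "card (Y \<inter> G i) = 1"
proof -
  have ge1: "1 \<le> card (Y \<inter> G j)" if "j \<in> I" for j
    using assms(1) assms(4)[OF that] by (simp add: Suc_le_eq card_gt_0_iff)
  have "(\<Sum>j\<in>I. card (Y \<inter> G j) - 1) = (\<Sum>j\<in>I. card (Y \<inter> G j)) - card I"
    using sum_subtractf_nat[of I "\<lambda>_. 1", OF ge1] by simp
  also have "\<dots> = 0" using assms(5) card_Int_UN_disjoint[OF assms(1,2,3)] by simp
  finally have "card (Y \<inter> G i) - 1 = 0" using assms(2,6) by simp
  then show ?thesis using ge1 assms(6) by fastforce
qed

section \<open>The threshold graph G'\<close>

locale clique_reduction =
  fixes V :: "'a set" and E :: "'a set set" and col :: "'a \<Rightarrow> nat"
    and q :: nat and low :: "'a \<Rightarrow> nat"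
  assumes finV: "finite V"
    and simple: "E \<subseteq> {{u, v} | u v. u \<in> V \<and> v \<in> V \<and> u \<noteq> v}"
    and col_range: "\<forall>v\<in>V. col v \<in> {1..q}"
    and col_proper: "\<forall>u v. {u, v} \<in> E \<longrightarrow> col u \<noteq> col v"
    and low_inj: "inj_on low V"
    and low_range: "low ` V \<subseteq> {1..card V}"
begin

abbreviation "nodes \<equiv> Gp_V V E col q low"
abbreviation "adj \<equiv> Gp_adj V E col q low"
abbreviation "thr \<equiv> Gp_t V E col q low"
abbreviation "conns \<equiv> connodes V E col q low"
abbreviation "B \<equiv> Bnodes V E q"
abbreviation "sel \<equiv> XV ` V \<union> XE ` E"

abbreviation D :: "'a node set \<Rightarrow> 'a node set" where
  "D Y \<equiv> diffusion nodes adj thr Y"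

lemma edgeE:
  assumes "e \<in> E"
  obtains u w where "e = {u, w}" "u \<in> V" "w \<in> V" "col u \<noteq> col w"
  using assms simple col_proper by blast

lemma finite_E: "finite E"
  using simple finite_subset[of E "Pow V"] finV by blast

lemma colpairs_eq: "colpairs q = {P. P \<subseteq> {1..q} \<and> card P = 2}"
  unfolding colpairs_def card_2_iff by blast

lemma finite_colpairs: "finite (colpairs q)"
  unfolding colpairs_eq by (rule finite_subset[of _ "Pow {1..q}"]) auto

lemma card_colpairs: "card (colpairs q) = q choose 2"
  unfolding colpairs_eq using n_subsets[of "{1..q}" 2] by simp

lemma colpairsE:
  assumes "P \<in> colpairs q" "c \<in> P"
  obtains d where "P = {c, d}" "c \<in> {1..q}" "d \<in> {1..q}" "c \<noteq> d"
proof -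
  obtain c' d' where P: "P = {c', d'}" "c' \<in> {1..q}" "d' \<in> {1..q}" "c' \<noteq> d'"
    using assms(1) unfolding colpairs_def by blast
  then have "c = c' \<or> c = d'" using assms(2) by blast
  then show ?thesis using P that by (metis insert_commute)
qed

lemma card_colpairs_containing:
  assumes "c \<in> {1..q}"
  shows "card {P \<in> colpairs q. c \<in> P} = q - 1"
proof -
  have "{P \<in> colpairs q. c \<in> P} = (\<lambda>d. {c, d}) ` ({1..q} - {c})"
    using assms unfolding colpairs_def by (auto simp: doubleton_eq_iff) blast+
  moreover have "inj_on (\<lambda>d. {c, d}) ({1..q} - {c})"
    by (auto simp: inj_on_def doubleton_eq_iff)
  ultimately show ?thesis using assms by (simp add: card_image)
qed

lemma colpairs_image_edge: "e \<in> E \<Longrightarrow> col ` e \<in> colpairs q"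
  using col_range unfolding colpairs_def by (elim edgeE) auto

lemma Ecd_subset: "Ecd E col P \<subseteq> E"
  unfolding Ecd_def by blast

lemma highv_plus_low: "v \<in> V \<Longrightarrow> highv (card V) low v + low v = 2 * card V"
  using low_range unfolding highv_def by force

lemma gad_attach_XV: "(XV v, v') \<in> gad_attach V E col P c \<longleftrightarrow> v' = v \<and> v \<in> V \<and> col v = c"
  unfolding gad_attach_def by auto

lemma gad_attach_XE: "(XE e, v) \<in> gad_attach V E col P c \<longleftrightarrow> e \<in> Ecd E col P \<and> v \<in> e \<and> col v = c"
  unfolding gad_attach_def by auto

lemma gad_attach_sel: "(x, v) \<in> gad_attach V E col P c \<Longrightarrow> x \<in> sel \<and> v \<in> V"
  unfolding gad_attach_def Ecd_def using simple by blast

lemma gad_attach_unique: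
  "(x, v) \<in> gad_attach V E col P c \<Longrightarrow> (x, v') \<in> gad_attach V E col P c \<Longrightarrow> v = v'"
  unfolding gad_attach_def Ecd_def by (auto elim!: edgeE)

lemma validx_iff: "(P, c, b) \<in> validx q \<longleftrightarrow> P \<in> colpairs q \<and> c \<in> P"
  unfolding validx_def by blast

lemma conn_iff: "Conn P c b x i \<in> conns \<longleftrightarrow>
    (P, c, b) \<in> validx q \<and> (\<exists>v. (x, v) \<in> gad_attach V E col P c \<and> i < gad_size (card V) low b x v)"
  unfolding connodes_def by blast

lemma conn_iff_attached:
  assumes "(x, v) \<in> gad_attach V E col P c"
  shows "Conn P c b x i \<in> conns \<longleftrightarrow> (P, c, b) \<in> validx q \<and> i < gad_size (card V) low b x v"
  using assms gad_attach_unique[OF assms] unfolding conn_iff by blast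

lemma conn_XV_iff: "Conn P c b (XV v) i \<in> conns \<longleftrightarrow>
    P \<in> colpairs q \<and> c \<in> P \<and> v \<in> V \<and> col v = c \<and> i < gad_size (card V) low b (XV v) v"
  unfolding conn_iff validx_iff gad_attach_XV by auto

lemma conn_XE_iff: "Conn P c b (XE e) i \<in> conns \<longleftrightarrow>
    P \<in> colpairs q \<and> c \<in> P \<and> e \<in> Ecd E col P \<and>
    (\<exists>v\<in>e. col v = c \<and> i < gad_size (card V) low b (XE e) v)"
  unfolding conn_iff validx_iff gad_attach_XE by auto

lemma connE:
  assumes "w \<in> conns"
  obtains P c b x i v where "w = Conn P c b x i" "(P, c, b) \<in> validx q"
    "(x, v) \<in> gad_attach V E col P c" "i < gad_size (card V) low b x v"
  using assms unfolding connodes_def by blast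

lemma conn_sel: "Conn P c b x i \<in> conns \<Longrightarrow> x \<in> sel"
  unfolding conn_iff using gad_attach_sel by blast

lemma finite_validx: "finite (validx q)"
proof -
  have "validx q \<subseteq> colpairs q \<times> {1..q} \<times> UNIV"
    unfolding validx_def colpairs_def by auto
  then show ?thesis by (rule finite_subset) (simp add: finite_colpairs)
qed

lemma finite_conns: "finite conns"
proof -
  have "finite (validx q \<times> sel \<times> {..<2 * card V + 1})"
    using finite_validx finV finite_E by simp
  moreover have "conns \<subseteq> (\<lambda>((P, c, b), x, i). Conn P c b x i) ` (validx q \<times> sel \<times> {..<2 * card V + 1})"
  proof
    fix w assume "w \<in> conns"
    then obtain P c b x i v where w: "w = Conn P c b x i" "(P, c, b) \<in> validx q"
      "(x, v) \<in> gad_attach V E col P c" "i < gad_size (card V) low b x v"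
      by (rule connE)
    moreover have "gad_size (card V) low b x v \<le> 2 * card V"
      using low_range gad_attach_sel[OF w(3)] by (force simp: gad_size_def highv_def split: node.split)
    ultimately show "w \<in> (\<lambda>((P, c, b), x, i). Conn P c b x i) ` (validx q \<times> sel \<times> {..<2 * card V + 1})"
      using gad_attach_sel[OF w(3)] by force
  qed
  ultimately show ?thesis by (rule finite_surj)
qed

lemma finite_nodes: "finite nodes"
  unfolding Gp_V_def guards_def Bnodes_def
  using finV finite_E finite_colpairs finite_validx finite_conns by simp

lemma in_nodes:
  "v \<in> V \<Longrightarrow> XV v \<in> nodes" "e \<in> E \<Longrightarrow> XE e \<in> nodes" "g \<in> guards E q \<Longrightarrow> g \<in> nodes"
  "(P, c, b) \<in> validx q \<Longrightarrow> Val P c b \<in> nodes" "w \<in> conns \<Longrightarrow> w \<in> nodes" "w \<in> B \<Longrightarrow> w \<in> nodes"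
  unfolding Gp_V_def by force+

lemma thr_simps:
  "thr (XV v) = 0" "thr (XE e) = 0" "thr (Conn P c b x i) = 1" "thr (BN j) = 1"
  "thr (GC c) = card {v \<in> V. col v = c}" "thr (GE P) = card (Ecd E col P)"
  "thr (Val P c b) = card (nbrs nodes adj (Val P c b)) + 1 - 2 * card V"
  unfolding Gp_t_def by simp_all

lemma nbrs_Val: "nbrs nodes adj (Val P c b) = {w \<in> conns. \<exists>x i. w = Conn P c b x i}"
  by (auto simp: nbrs_def Gp_adj_def Gp_E_def in_nodes Bnodes_def guards_def dest: conn_sel)

lemma adj_Conn: "adj (Conn P c b x i) w \<Longrightarrow> w = Val P c b \<or> w = x"
  by (auto simp: Gp_adj_def Gp_E_def Bnodes_def guards_def dest: conn_sel)

lemma adj_BN: "adj (BN j) w \<Longrightarrow> w \<in> guards E q"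
  by (auto simp: Gp_adj_def Gp_E_def Bnodes_def guards_def dest: conn_sel)

lemma sel_in_D: "x \<in> sel \<Longrightarrow> x \<notin> Y \<Longrightarrow> x \<in> D Y"
  by (rule diffusion_if_threshold_0) (auto simp: in_nodes thr_simps)

lemma conn_in_D:
  assumes "Conn P c b x i \<in> conns" "Conn P c b x i \<notin> Y" "x \<notin> Y"
  shows "Conn P c b x i \<in> D Y"
proof (rule diffusion_if_active_nbrs[OF finite_nodes _ _ _ _])
  have "x \<in> sel" using conn_sel[OF assms(1)] .
  then show "{x} \<subseteq> nbrs nodes adj (Conn P c b x i)" "{x} \<subseteq> D Y"
    using assms by (auto simp: nbrs_def Gp_adj_def Gp_E_def in_nodes intro: sel_in_D)
qed (use assms in \<open>auto simp: in_nodes thr_simps\<close>)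

lemma guardsE:
  assumes "g \<in> guards E q"
  obtains (GC) c where "c \<in> {1..q}" "g = GC c" | (GE) P where "P \<in> colpairs q" "g = GE P"
  using assms unfolding guards_def by blast

lemma card_guards: "card (guards E q) = lval q"
proof -
  have "card (guards E q) = card (GC ` {1..q} :: 'a node set) + card (GE ` colpairs q :: 'a node set)"
    unfolding guards_def by (rule card_Un_disjoint) (auto simp: finite_colpairs)
  also have "\<dots> = q + (q choose 2)"
    by (simp add: card_image inj_on_def card_colpairs del: One_nat_def)
  finally show ?thesis unfolding lval_def .
qed

lemma finite_guards: "finite (guards E q)"
  unfolding guards_def using finite_colpairs by simp

definition guard_group :: "'a node \<Rightarrow> 'a node set" where
  "guard_group g = (case g of GC c \<Rightarrow> insert g (XV ` {v \<in> V. col v = c})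
                            | GE P \<Rightarrow> insert g (XE ` Ecd E col P) | _ \<Rightarrow> {})"

lemma guard_group_simps:
  "guard_group (GC c) = insert (GC c) (XV ` {v \<in> V. col v = c})"
  "guard_group (GE P) = insert (GE P) (XE ` Ecd E col P)"
  unfolding guard_group_def by simp_all

lemma finite_guard_group: "finite (guard_group g)"
  using finV finite_subset[OF Ecd_subset finite_E]
  unfolding guard_group_def by (auto split: node.split)

lemma guard_in_guard_group: "g \<in> guards E q \<Longrightarrow> g \<in> guard_group g"
  by (elim guardsE) (simp_all add: guard_group_simps)

lemma guard_group_subset: "g \<in> guards E q \<Longrightarrow> guard_group g - {g} \<subseteq> sel"
  by (elim guardsE) (use Ecd_subset in \<open>auto simp: guard_group_simps\<close>)

lemma guard_group_subset_guards_sel: "g \<in> guards E q \<Longrightarrow> guard_group g \<subseteq> guards E q \<union> sel"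
  using guard_group_subset by blast

lemma guard_group_disjoint: "disjoint_family_on guard_group (guards E q)"
  unfolding disjoint_family_on_def guards_def
  by (auto simp: guard_group_simps Ecd_def)

lemma sel_in_guard_group:
  "v \<in> V \<Longrightarrow> XV v \<in> guard_group (GC (col v))" "e \<in> E \<Longrightarrow> XE e \<in> guard_group (GE (col ` e))"
  unfolding guard_group_simps Ecd_def by auto

lemma guard_in_guards:
  "v \<in> V \<Longrightarrow> GC (col v) \<in> guards E q" "e \<in> E \<Longrightarrow> GE (col ` e) \<in> guards E q"
  unfolding guards_def using col_range colpairs_image_edge by auto

lemma nbrs_guard:
  assumes "g \<in> guards E q"
  shows "nbrs nodes adj g = guard_group g - {g} \<union> B"
  using assms
  by (elim guardsE)
     (auto simp: nbrs_def Gp_adj_def Gp_E_def guard_group_simps in_nodes Ecd_def guards_def Bnodes_def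
       dest: conn_sel)

lemma thr_guard: "g \<in> guards E q \<Longrightarrow> thr g = card (guard_group g - {g})"
  by (elim guardsE) (auto simp: thr_simps guard_group_simps card_image inj_on_def image_iff
      intro!: arg_cong[where f = card])

lemma guard_in_D:
  assumes "g \<in> guards E q" "Y \<inter> guard_group g = {}"
  shows "g \<in> D Y"
proof (rule diffusion_if_active_nbrs[OF finite_nodes _ _ _ _])
  show "guard_group g - {g} \<subseteq> nbrs nodes adj g" using nbrs_guard[OF assms(1)] by blast
  show "guard_group g - {g} \<subseteq> D Y"
    using guard_group_subset[OF assms(1)] assms(2) by (auto intro: sel_in_D)
  show "g \<in> nodes - Y"
    using assms in_nodes(3) guard_in_guard_group by blast
qed (simp add: thr_guard[OF assms(1)])

lemma B_in_D:
  assumes "w \<in> B" "w \<notin> Y" "g \<in> guards E q" "g \<in> D Y"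
  shows "w \<in> D Y"
proof (rule diffusion_if_active_nbrs[OF finite_nodes _ _ _ _])
  show "{g} \<subseteq> nbrs nodes adj w"
    using assms by (auto simp: nbrs_def Gp_adj_def Gp_E_def in_nodes Bnodes_def)
qed (use assms in \<open>auto simp: in_nodes thr_simps Bnodes_def\<close>)

definition gadget :: "nat set \<Rightarrow> nat \<Rightarrow> bool \<Rightarrow> 'a node \<Rightarrow> 'a node set" where
  "gadget P c b x = {w \<in> conns. \<exists>i. w = Conn P c b x i}"

lemma card_gadget:
  assumes "(P, c, b) \<in> validx q" "(x, v) \<in> gad_attach V E col P c"
  shows "card (gadget P c b x) = gad_size (card V) low b x v"
proof -
  have "gadget P c b x = Conn P c b x ` {..<gad_size (card V) low b x v}"
    using assms by (auto simp: gadget_def conn_iff_attached)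
  then show ?thesis by (simp add: card_image inj_on_def)
qed

lemma gadget_subset_nbrs: "gadget P c b x \<subseteq> nbrs nodes adj (Val P c b)"
  by (auto simp: gadget_def nbrs_Val)

lemma finite_gadget: "finite (gadget P c b x)"
  unfolding gadget_def using finite_conns by simp

definition conns_at :: "'a node \<Rightarrow> 'a node set" where
  "conns_at x = {w \<in> conns. \<exists>P c b i. w = Conn P c b x i}"

lemma sum_gad_size: "v \<in> V \<Longrightarrow> (\<Sum>b\<in>UNIV. gad_size (card V) low b x v) = 2 * card V"
  using highv_plus_low by (simp add: UNIV_bool gad_size_def add.commute split: node.split)

lemma card_conns_at_XV:
  assumes "v \<in> V"
  shows "card (conns_at (XV v)) = 2 * card V * (q - 1)"
proof -
  let ?I = "SIGMA P:{P \<in> colpairs q. col v \<in> P}. SIGMA b:UNIV. {..<gad_size (card V) low b (XV v) v}"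
  let ?f = "\<lambda>(P, b, i). Conn P (col v) b (XV v) i"
  have "conns_at (XV v) = ?f ` ?I"
  proof (intro equalityI subsetI)
    fix w assume "w \<in> conns_at (XV v)"
    then obtain P c b i where "w = Conn P c b (XV v) i" "Conn P c b (XV v) i \<in> conns"
      unfolding conns_at_def by blast
    then show "w \<in> ?f ` ?I" by (auto simp: conn_XV_iff intro!: image_eqI[of _ _ "(P, b, i)"])
  qed (use assms in \<open>auto simp: conns_at_def conn_XV_iff\<close>)
  moreover have "inj_on ?f ?I" by (auto simp: inj_on_def)
  moreover have "card ?I = 2 * card V * (q - 1)"
    using finite_colpairs sum_gad_size[OF assms] card_colpairs_containing col_range assms
    by (simp add: card_SigmaI)
  ultimately show ?thesis by (simp add: card_image)
qed

lemma card_conns_at_XE: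
  assumes "e \<in> E"
  shows "card (conns_at (XE e)) = 4 * card V"
proof -
  obtain u w where e: "e = {u, w}" "u \<in> V" "w \<in> V" "col u \<noteq> col w"
    using assms by (rule edgeE)
  let ?I = "SIGMA v:e. SIGMA b:UNIV. {..<gad_size (card V) low b (XE e) v}"
  let ?f = "\<lambda>(v, b, i). Conn (col ` e) (col v) b (XE e) i"
  have "conns_at (XE e) = ?f ` ?I"
  proof (intro equalityI subsetI)
    fix x assume "x \<in> conns_at (XE e)"
    then obtain P c b i where x: "x = Conn P c b (XE e) i" "Conn P c b (XE e) i \<in> conns"
      unfolding conns_at_def by blast
    then obtain v where "v \<in> e" "col v = c" "i < gad_size (card V) low b (XE e) v" "P = col ` e"
      unfolding conn_XE_iff Ecd_def by blast
    then show "x \<in> ?f ` ?I" using x by (auto intro!: image_eqI[of _ _ "(v, b, i)"])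
  qed (use assms colpairs_image_edge in \<open>auto simp: conns_at_def conn_XE_iff Ecd_def\<close>)
  moreover have "inj_on ?f ?I" using e by (auto simp: inj_on_def)
  moreover have "card ?I = 4 * card V"
  proof -
    have "u \<noteq> w" using e(4) by blast
    then show ?thesis using e sum_gad_size[OF e(2)] sum_gad_size[OF e(3)] by (simp add: card_SigmaI)
  qed
  ultimately show ?thesis by (simp add: card_image)
qed

definition free_sel :: "'a set \<Rightarrow> 'a set set \<Rightarrow> 'a node set" where
  "free_sel A F = XV ` (V - A) \<union> XE ` (E - F)"

definition free_region :: "'a set \<Rightarrow> 'a set set \<Rightarrow> 'a node set" where
  "free_region A F = free_sel A F \<union> \<Union>(conns_at ` free_sel A F)"

lemma free_sel_simps:
  "XV v \<in> free_sel A F \<longleftrightarrow> v \<in> V - A" "XE e \<in> free_sel A F \<longleftrightarrow> e \<in> E - F"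
  unfolding free_sel_def by auto

lemma free_region_simps:
  "XV v \<in> free_region A F \<longleftrightarrow> v \<in> V - A"
  "XE e \<in> free_region A F \<longleftrightarrow> e \<in> E - F"
  "Conn P c b x i \<in> free_region A F \<longleftrightarrow> Conn P c b x i \<in> conns \<and> x \<in> free_sel A F"
  "GC c \<notin> free_region A F" "GE P \<notin> free_region A F" "Val P c b \<notin> free_region A F"
  "BN j \<notin> free_region A F"
  by (auto simp: free_region_def free_sel_def conns_at_def)

lemma sel_free_region_iff: "x \<in> sel \<Longrightarrow> x \<in> free_region A F \<longleftrightarrow> x \<in> free_sel A F"
  by (auto simp: free_region_simps free_sel_simps)

lemma B_free_region: "B \<inter> free_region A F = {}"
  by (auto simp: Bnodes_def free_region_simps)

lemma finite_free_region: "finite (free_region A F)"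
  unfolding free_region_def free_sel_def conns_at_def using finV finite_E finite_conns by auto

lemma free_region_subset_D:
  assumes "free_sel A F \<inter> Y = {}" "Y \<inter> conns = {}"
  shows "free_region A F \<subseteq> D Y"
proof
  fix w assume "w \<in> free_region A F"
  then consider "w \<in> free_sel A F"
    | P c b x i where "w = Conn P c b x i" "w \<in> conns" "x \<in> free_sel A F"
    unfolding free_region_def conns_at_def by blast
  then show "w \<in> D Y"
  proof cases
    case 1 then show ?thesis using assms(1) by (auto simp: free_sel_def intro: sel_in_D)
  next
    case 2 then show ?thesis using assms conn_in_D by blast
  qed
qed

lemma card_free_region: "card (free_region A F) =
    card (V - A) * (2 * card V * (q - 1) + 1) + card (E - F) * (4 * card V + 1)"
proof -
  have fin: "finite (free_sel A F)" unfolding free_sel_def using finV finite_E by simp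
  have "card (free_region A F) = card (\<Union>x\<in>free_sel A F. insert x (conns_at x))"
    unfolding free_region_def by (rule arg_cong[where f = card]) blast
  also have "\<dots> = (\<Sum>x\<in>free_sel A F. card (insert x (conns_at x)))"
    using fin finite_conns by (intro card_UN_disjoint) (auto simp: free_sel_def conns_at_def)
  also have "\<dots> = (\<Sum>x\<in>free_sel A F. Suc (card (conns_at x)))"
    using finite_conns by (intro sum.cong) (auto simp: free_sel_def conns_at_def)
  also have "\<dots> = (\<Sum>v\<in>V - A. Suc (card (conns_at (XV v)))) + (\<Sum>e\<in>E - F. Suc (card (conns_at (XE e))))"
    unfolding free_sel_def using finV finite_E
    by (subst sum.union_disjoint) (auto simp: sum.reindex inj_on_def)
  also have "\<dots> = card (V - A) * (2 * card V * (q - 1) + 1) + card (E - F) * (4 * card V + 1)"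
    by (simp add: card_conns_at_XV card_conns_at_XE)
  finally show ?thesis .
qed

text \<open>
  k in terms of the sizes 2n(q - 1) + 1 and 4n + 1 of a free vertex node, resp. edge node, with its
  connection nodes. For q = 0 the truncated q - 1 is harmless because then V is empty.
\<close>

lemma kval_eq: "kval V E q =
    (int (card V) - int q) * int (2 * card V * (q - 1) + 1) +
    (int (card E) - int (q choose 2)) * int (4 * card V + 1)"
proof -
  have "int (2 * card V * (q - 1) + 1) = 2 * int (card V) * int q - 2 * int (card V) + 1"
  proof (cases q)
    case 0
    then have "V = {}" using col_range by auto
    then show ?thesis by simp
  next
    case (Suc r)
    then show ?thesis by (simp add: algebra_simps)
  qed
  then show ?thesis unfolding kval_def by (simp add: add.commute)
qed

lemma int_card_free_region:
  assumes "A \<subseteq> V" "F \<subseteq> E"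
  shows "int (card (free_region A F)) = kval V E q
      + (int q - int (card A)) * int (2 * card V * (q - 1) + 1)
      + (int (q choose 2) - int (card F)) * int (4 * card V + 1)"
proof -
  define X Z where "X = 2 * card V * (q - 1) + 1" and "Z = 4 * card V + 1"
  have "finite A" using assms(1) finV by (rule finite_subset)
  moreover have "finite F" using assms(2) finite_E by (rule finite_subset)
  ultimately have diff: "int (card (V - A)) = int (card V) - int (card A)"
    "int (card (E - F)) = int (card E) - int (card F)"
    using assms finV finite_E by (simp_all add: card_Diff_subset card_mono of_nat_diff)
  have "card (free_region A F) = card (V - A) * X + card (E - F) * Z"
    unfolding X_def Z_def by (rule card_free_region)
  then have free: "int (card (free_region A F)) = int (card (V - A)) * int X + int (card (E - F)) * int Z"
    by simp
  have "kval V E q = (int (card V) - int q) * int X + (int (card E) - int (q choose 2)) * int Z"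
    unfolding X_def Z_def by (rule kval_eq)
  then show ?thesis unfolding free diff X_def[symmetric] Z_def[symmetric] by (simp add: algebra_simps)
qed

subsection \<open>From a clique to a small diffusion\<close>

lemma card_nbrs_guard_free_region_less:
  assumes "g \<in> guards E q" "\<not> guard_group g - {g} \<subseteq> free_sel A F"
  shows "card (nbrs nodes adj g \<inter> free_region A F) < thr g"
proof -
  have "nbrs nodes adj g \<inter> free_region A F \<subseteq> (guard_group g - {g}) \<inter> free_sel A F"
  proof
    fix x assume x: "x \<in> nbrs nodes adj g \<inter> free_region A F"
    then have "x \<in> guard_group g - {g}" using nbrs_guard[OF assms(1)] B_free_region by blast
    moreover from this have "x \<in> sel" using guard_group_subset[OF assms(1)] by blast
    ultimately show "x \<in> (guard_group g - {g}) \<inter> free_sel A F"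
      using x sel_free_region_iff[of x A F] by simp
  qed
  also have "\<dots> \<subset> guard_group g - {g}" using assms(2) by blast
  finally have "card (nbrs nodes adj g \<inter> free_region A F) < card (guard_group g - {g})"
    using finite_guard_group by (intro psubset_card_mono) auto
  then show ?thesis using thr_guard[OF assms(1)] by simp
qed

lemma card_Val_nbrs_free_region_less:
  assumes "(P, c, b) \<in> validx q" "A \<subseteq> V" "F \<subseteq> E" "v \<in> A" "e \<in> F" "v \<in> e" "col v = c" "col ` e = P"
  shows "card (nbrs nodes adj (Val P c b) \<inter> free_region A F) < thr (Val P c b)"
proof -
  let ?N = "nbrs nodes adj (Val P c b)"
  let ?R = "gadget P c b (XV v) \<union> gadget P c b (XE e)"
  have "(XV v, v) \<in> gad_attach V E col P c" "(XE e, v) \<in> gad_attach V E col P c"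
    using assms by (auto simp: gad_attach_XV gad_attach_XE Ecd_def)
  then have "card (gadget P c b (XV v)) + card (gadget P c b (XE e)) = 2 * card V"
    using assms(2,4) highv_plus_low[of v] by (auto simp: card_gadget[OF assms(1)] gad_size_def)
  moreover have "gadget P c b (XV v) \<inter> gadget P c b (XE e) = {}" by (auto simp: gadget_def)
  ultimately have card_R: "card ?R = 2 * card V" by (simp add: card_Un_disjoint finite_gadget)
  have fin: "finite ?N" using finite_nodes by (simp add: nbrs_def)
  have sub: "?R \<subseteq> ?N" using gadget_subset_nbrs by blast
  have "?R \<inter> free_region A F = {}"
    using assms(4,5) by (auto simp: gadget_def free_region_simps free_sel_simps)
  then have "card (?N \<inter> free_region A F) \<le> card (?N - ?R)"
    using fin by (intro card_mono) auto
  also have "\<dots> = card ?N - 2 * card V"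
    using card_Diff_subset[OF _ sub] card_R by (simp add: finite_gadget)
  finally have "card (?N \<inter> free_region A F) \<le> card ?N - 2 * card V" .
  moreover have "2 * card V \<le> card ?N" using card_mono[OF fin sub] card_R by simp
  ultimately show ?thesis by (simp add: thr_simps)
qed

lemma nbrs_free_region_Conn:
  assumes "Conn P c b x i \<in> conns" "Conn P c b x i \<notin> free_region A F"
  shows "nbrs nodes adj (Conn P c b x i) \<inter> free_region A F = {}"
  using assms conn_sel[OF assms(1)]
  by (auto simp: nbrs_def free_region_simps free_sel_simps dest!: adj_Conn)

lemma nbrs_free_region_BN: "nbrs nodes adj (BN j) \<inter> free_region A F = {}"
  by (auto simp: nbrs_def guards_def free_region_simps dest!: adj_BN)

lemma guard_group_not_free:
  assumes "A \<subseteq> V" "F \<subseteq> E"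
    and colours: "\<And>c. c \<in> {1..q} \<Longrightarrow> \<exists>v\<in>A. col v = c"
    and pairs: "\<And>P c. P \<in> colpairs q \<Longrightarrow> c \<in> P \<Longrightarrow> \<exists>v\<in>A. \<exists>e\<in>F. v \<in> e \<and> col v = c \<and> col ` e = P"
    and "g \<in> guards E q"
  shows "\<not> guard_group g - {g} \<subseteq> free_sel A F"
  using \<open>g \<in> guards E q\<close>
proof (cases rule: guardsE)
  case (GC c)
  then obtain v where "v \<in> A" "col v = c" using colours by blast
  then have "XV v \<in> guard_group g - {g}" "XV v \<notin> free_sel A F"
    using GC assms(1) by (auto simp: guard_group_simps free_sel_simps)
  then show ?thesis by blast
next
  case (GE P)
  then obtain c where "c \<in> P" unfolding colpairs_def by blast
  then obtain e where "e \<in> F" "col ` e = P" using pairs GE(1) by blast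
  then have "XE e \<in> guard_group g - {g}" "XE e \<notin> free_sel A F"
    using GE assms(2) by (auto simp: guard_group_simps free_sel_simps Ecd_def)
  then show ?thesis by blast
qed

lemma D_subset_free_region:
  assumes "A \<subseteq> V" "F \<subseteq> E"
    and colours: "\<And>c. c \<in> {1..q} \<Longrightarrow> \<exists>v\<in>A. col v = c"
    and pairs: "\<And>P c. P \<in> colpairs q \<Longrightarrow> c \<in> P \<Longrightarrow> \<exists>v\<in>A. \<exists>e\<in>F. v \<in> e \<and> col v = c \<and> col ` e = P"
  shows "D (XV ` A \<union> XE ` F) \<subseteq> free_region A F"
proof (rule diffusion_subset_if_closed[OF finite_nodes])
  fix u assume u: "u \<in> nodes - (XV ` A \<union> XE ` F) - free_region A F"
  then consider "u \<in> sel" | "u \<in> guards E q" | P c b where "u = Val P c b" "(P, c, b) \<in> validx q"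
    | "u \<in> conns" | "u \<in> B"
    unfolding Gp_V_def by auto
  then show "card (nbrs nodes adj u \<inter> free_region A F) < thr u"
  proof cases
    case 1
    then show ?thesis using u by (auto simp: free_region_simps)
  next
    case 2
    then have "\<not> guard_group u - {u} \<subseteq> free_sel A F"
      using guard_group_not_free[OF assms] by blast
    then show ?thesis by (rule card_nbrs_guard_free_region_less[OF 2])
  next
    case (3 P c b)
    then obtain v e where "v \<in> A" "e \<in> F" "v \<in> e" "col v = c" "col ` e = P"
      using pairs by (meson validx_iff)
    then show ?thesis using 3 assms(1,2) by (simp add: card_Val_nbrs_free_region_less)
  next
    case 4
    then obtain P c b x i where "u = Conn P c b x i" unfolding connodes_def by blast
    then show ?thesis using u 4 nbrs_free_region_Conn[of P c b x i A F] by (simp add: thr_simps)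
  next
    case 5
    then show ?thesis using nbrs_free_region_BN by (auto simp: thr_simps Bnodes_def)
  qed
qed

lemma blocking_set_if_clique:
  assumes "K \<subseteq> V" "card K = q" "is_clique E K"
  shows "\<exists>Y \<subseteq> nodes. card Y \<le> lval q \<and> int (card (D Y)) \<le> kval V E q"
proof -
  define F where "F = {e. e \<subseteq> K \<and> card e = 2}"
  have finK: "finite K" using assms(1) finV finite_subset by blast
  have F_E: "F \<subseteq> E" using assms(3) unfolding F_def is_clique_def card_2_iff by auto
  have card_F: "card F = q choose 2" unfolding F_def using n_subsets[OF finK, of 2] assms(2) by simp
  have "inj_on col K"
    using assms(3) col_proper unfolding is_clique_def inj_on_def by metis
  then have "col ` K = {1..q}"
    using assms(1,2) col_range card_image by (intro card_subset_eq) auto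
  then have colours: "\<And>c. c \<in> {1..q} \<Longrightarrow> \<exists>v\<in>K. col v = c" by (metis imageE)
  have pairs: "\<exists>v\<in>K. \<exists>e\<in>F. v \<in> e \<and> col v = c \<and> col ` e = P"
    if P: "P \<in> colpairs q" "c \<in> P" for P c
  proof -
    obtain d where "P = {c, d}" "c \<in> {1..q}" "d \<in> {1..q}" "c \<noteq> d"
      using P by (rule colpairsE)
    moreover obtain x y where "x \<in> K" "y \<in> K" "col x = c" "col y = d"
      using colours calculation by metis
    ultimately show ?thesis by (intro bexI[of _ x] bexI[of _ "{x, y}"]) (auto simp: F_def card_insert_if)
  qed
  let ?Y = "XV ` K \<union> XE ` F"
  have "?Y \<subseteq> nodes" using assms(1) F_E in_nodes by blast
  moreover have "card ?Y \<le> lval q"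
    using card_Un_le[of "XV ` K" "XE ` F"] card_image_le[OF finK, of XV]
      card_image_le[OF finite_subset[OF F_E finite_E], of XE] assms(2) card_F
    unfolding lval_def by linarith
  moreover have "int (card (D ?Y)) \<le> kval V E q"
  proof -
    have "card (D ?Y) \<le> card (free_region K F)"
      by (rule card_mono[OF finite_free_region D_subset_free_region[OF assms(1) F_E colours pairs]])
    then show ?thesis using int_card_free_region[OF assms(1) F_E] assms(2) card_F by simp
  qed
  ultimately show ?thesis by blast
qed

subsection \<open>From a small diffusion to a clique\<close>

lemma finite_D: "finite (D Y)"
  using diffusion_subset[of nodes adj thr Y] finite_nodes by (auto intro: finite_subset)

lemma card_B:
  assumes "0 \<le> kval V E q"
  shows "int (card B) = kval V E q"
proof -
  have "B = BN ` {..<nat (kval V E q)}" unfolding Bnodes_def by auto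
  then show ?thesis using assms by (simp add: card_image inj_on_def)
qed

lemma card_sel: "card sel = card V + card E"
proof -
  have "card sel = card (XV ` V) + card (XE ` E)"
    using finV finite_E by (intro card_Un_disjoint) auto
  then show ?thesis by (simp add: card_image inj_on_def)
qed

lemma kval_neg:
  assumes "card V \<le> q" "card E \<le> q choose 2" "card V + card E < lval q"
  shows "kval V E q < 0"
proof -
  have "kval V E q \<le> (int (card V) - int q) + (int (card E) - int (q choose 2))"
    unfolding kval_eq using assms(1,2)
    by (intro add_mono) (simp_all add: mult_le_cancel_left2)
  then show ?thesis using assms(3) unfolding lval_def by linarith
qed

definition chosen_vertices :: "'a node set \<Rightarrow> 'a set" where
  "chosen_vertices Y = {v \<in> V. XV v \<in> Y}"

definition chosen_edges :: "'a node set \<Rightarrow> 'a set set" where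
  "chosen_edges Y = {e \<in> E. XE e \<in> Y}"

definition blocked_guards :: "'a node set \<Rightarrow> 'a node set" where
  "blocked_guards Y = {g \<in> guards E q. Y \<inter> guard_group g \<noteq> {}}"

lemma blocked_guards_subset: "blocked_guards Y \<subseteq> guards E q"
  unfolding blocked_guards_def by blast

lemma finite_blocked_guards: "finite (blocked_guards Y)"
  using finite_guards blocked_guards_subset by (rule finite_subset[rotated])

lemma disjoint_blocked_guards: "disjoint_family_on guard_group (blocked_guards Y)"
  by (rule disjoint_family_on_mono[OF blocked_guards_subset guard_group_disjoint])

lemma blocked_guards_hit: "g \<in> blocked_guards Y \<Longrightarrow> Y \<inter> guard_group g \<noteq> {}"
  unfolding blocked_guards_def by blast

lemma inj_on_chosen:
  assumes "finite Y" "\<And>g. g \<in> guards E q \<Longrightarrow> card (Y \<inter> guard_group g) \<le> 1"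
  shows "inj_on col (chosen_vertices Y)" "inj_on ((`) col) (chosen_edges Y)"
proof -
  have same: "x = y" if "g \<in> guards E q" "x \<in> Y \<inter> guard_group g" "y \<in> Y \<inter> guard_group g" for g x y
    using assms(2)[OF that(1)] that(2,3) card_le_Suc0_iff_eq[of "Y \<inter> guard_group g"] assms(1) by auto
  show "inj_on col (chosen_vertices Y)"
  proof (rule inj_onI)
    fix v w assume "v \<in> chosen_vertices Y" "w \<in> chosen_vertices Y" "col v = col w"
    then show "v = w"
      using same[OF guard_in_guards(1), of v "XV v" "XV w"] sel_in_guard_group(1)[of v] sel_in_guard_group(1)[of w]
      unfolding chosen_vertices_def by auto
  qed
  show "inj_on ((`) col) (chosen_edges Y)"
  proof (rule inj_onI)
    fix e e' assume "e \<in> chosen_edges Y" "e' \<in> chosen_edges Y" "col ` e = col ` e'"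
    then show "e = e'"
      using same[OF guard_in_guards(2), of e "XE e" "XE e'"] sel_in_guard_group(2)[of e] sel_in_guard_group(2)[of e']
      unfolding chosen_edges_def by auto
  qed
qed

lemma card_chosen_le:
  assumes "finite Y" "\<And>g. g \<in> guards E q \<Longrightarrow> card (Y \<inter> guard_group g) \<le> 1"
  shows "card (chosen_vertices Y) \<le> q" "card (chosen_edges Y) \<le> q choose 2"
proof -
  have "card (chosen_vertices Y) = card (col ` chosen_vertices Y)"
    using inj_on_chosen(1)[OF assms] by (simp add: card_image)
  also have "\<dots> \<le> card {1..q}"
    using col_range by (intro card_mono) (auto simp: chosen_vertices_def)
  finally show "card (chosen_vertices Y) \<le> q" by simp
  have "card (chosen_edges Y) = card ((`) col ` chosen_edges Y)"
    using inj_on_chosen(2)[OF assms] by (simp add: card_image)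
  also have "\<dots> \<le> card (colpairs q)"
    using finite_colpairs colpairs_image_edge by (intro card_mono) (auto simp: chosen_edges_def)
  finally show "card (chosen_edges Y) \<le> q choose 2" by (simp add: card_colpairs)
qed

lemma card_guard_group_le_1:
  assumes "finite Y" "card (Y \<inter> \<Union>(guard_group ` blocked_guards Y)) \<le> card (blocked_guards Y)"
    and "g \<in> guards E q"
  shows "card (Y \<inter> guard_group g) \<le> 1"
proof (cases "g \<in> blocked_guards Y")
  case True
  show ?thesis
    using card_tight_hitting_set[OF assms(1) finite_blocked_guards disjoint_blocked_guards
        blocked_guards_hit assms(2) True]
    by simp
next
  case False
  then show ?thesis using assms(3) by (simp add: blocked_guards_def)
qed

lemma unblocked_guard_budget:
  assumes Y: "Y \<subseteq> nodes" "card Y \<le> lval q" "int (card (D Y)) \<le> kval V E q"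
    and g: "g \<in> guards E q" "Y \<inter> guard_group g = {}"
  shows "sel \<subseteq> Y" "card (Y \<inter> \<Union>(guard_group ` blocked_guards Y)) \<le> card (blocked_guards Y)"
proof -
  let ?H = "blocked_guards Y" and ?T = "Y \<inter> \<Union>(guard_group ` blocked_guards Y)"
  have finY: "finite Y" using Y(1) finite_nodes by (rule finite_subset)
  have finB: "finite B" using in_nodes(6) finite_nodes by (blast intro: finite_subset)
  have "card ?H \<le> card ?T"
    by (rule card_le_card_hitting_set[OF finY finite_blocked_guards disjoint_blocked_guards
          blocked_guards_hit])
  moreover have "card ?T + card (Y \<inter> B) \<le> card Y"
  proof -
    have "?T \<subseteq> guards E q \<union> sel" using blocked_guards_subset guard_group_subset_guards_sel by blast
    then have "?T \<inter> (Y \<inter> B) = {}" by (auto simp: Bnodes_def guards_def)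
    then have "card ?T + card (Y \<inter> B) = card (?T \<union> (Y \<inter> B))"
      using finY by (intro card_Un_disjoint[symmetric]) auto
    also have "\<dots> \<le> card Y" using finY by (intro card_mono) auto
    finally show ?thesis .
  qed
  moreover have "card (B - Y) + card (guards E q - ?H) + card (sel - Y) \<le> card B"
  proof -
    have "g \<in> D Y" by (rule guard_in_D[OF g])
    then have "(B - Y) \<union> (guards E q - ?H) \<union> (sel - Y) \<subseteq> D Y"
      using B_in_D[OF _ _ g(1)] guard_in_D sel_in_D unfolding blocked_guards_def by blast
    then have "card ((B - Y) \<union> (guards E q - ?H) \<union> (sel - Y)) \<le> card (D Y)"
      by (rule card_mono[OF finite_D])
    moreover have "(B - Y) \<inter> (guards E q - ?H) = {}" "((B - Y) \<union> (guards E q - ?H)) \<inter> (sel - Y) = {}"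
      by (auto simp: Bnodes_def guards_def)
    ultimately have "card (B - Y) + card (guards E q - ?H) + card (sel - Y) \<le> card (D Y)"
      using finB finite_guards finV finite_E by (simp add: card_Un_disjoint)
    also have "\<dots> \<le> card B" using Y(3) card_B by linarith
    finally show ?thesis .
  qed
  moreover have "card (B - Y) + card (Y \<inter> B) = card B"
    using finB card_Diff_subset_Int[of B Y] card_mono[of B "Y \<inter> B"] by (simp add: Int_commute)
  moreover have "card (guards E q - ?H) + card ?H = lval q"
    using card_Diff_subset[OF finite_blocked_guards blocked_guards_subset]
      card_mono[OF finite_guards blocked_guards_subset] card_guards
    by simp
  ultimately have "card (sel - Y) = 0" "card ?T \<le> card ?H" using Y(2) by linarith+
  then show "sel \<subseteq> Y" "card ?T \<le> card ?H" using finV finite_E by auto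
qed

lemma guard_group_blocked:
  assumes Y: "Y \<subseteq> nodes" "card Y \<le> lval q" "int (card (D Y)) \<le> kval V E q"
    and g: "g \<in> guards E q"
  shows "Y \<inter> guard_group g \<noteq> {}"
proof
  assume unblocked: "Y \<inter> guard_group g = {}"
  let ?H = "blocked_guards Y" and ?T = "Y \<inter> \<Union>(guard_group ` blocked_guards Y)"
  have finY: "finite Y" using Y(1) finite_nodes by (rule finite_subset)
  note budget = unblocked_guard_budget[OF Y g unblocked]
  have "chosen_vertices Y = V" "chosen_edges Y = E"
    using budget(1) by (auto simp: chosen_vertices_def chosen_edges_def)
  then have "card V \<le> q" "card E \<le> q choose 2"
    using card_chosen_le[OF finY card_guard_group_le_1[OF finY budget(2)]] by simp_all
  moreover have "card V + card E < lval q"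
  proof -
    have "sel \<subseteq> ?T"
    proof
      fix x assume "x \<in> sel"
      moreover from this obtain g' where "g' \<in> guards E q" "x \<in> guard_group g'"
        using sel_in_guard_group guard_in_guards by blast
      moreover from calculation have "x \<in> Y" using budget(1) by blast
      ultimately have "g' \<in> ?H" "x \<in> Y" "x \<in> guard_group g'"
        unfolding blocked_guards_def by blast+
      then show "x \<in> ?T" by blast
    qed
    then have "card sel \<le> card ?T" using finY by (intro card_mono) auto
    also have "\<dots> \<le> card ?H" by (rule budget(2))
    also have "\<dots> < card (guards E q)"
      using g unblocked finite_guards by (intro psubset_card_mono) (auto simp: blocked_guards_def)
    finally show ?thesis using card_sel card_guards by simp
  qed
  ultimately have "kval V E q < 0" by (rule kval_neg)
  then show False using Y(3) by linarith
qed

lemma guards_blocked_once: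
  assumes Y: "Y \<subseteq> nodes" "card Y \<le> lval q"
    and blocked: "\<And>g. g \<in> guards E q \<Longrightarrow> Y \<inter> guard_group g \<noteq> {}"
  shows "\<And>g. g \<in> guards E q \<Longrightarrow> card (Y \<inter> guard_group g) \<le> 1" "Y \<subseteq> guards E q \<union> sel"
proof -
  let ?T = "Y \<inter> \<Union>(guard_group ` guards E q)"
  have finY: "finite Y" using Y(1) finite_nodes by (rule finite_subset)
  have H: "blocked_guards Y = guards E q" using blocked by (auto simp: blocked_guards_def)
  have "card (guards E q) \<le> card ?T"
    by (rule card_le_card_hitting_set[OF finY finite_guards guard_group_disjoint blocked])
  moreover have "card ?T \<le> card Y" using finY by (intro card_mono) auto
  ultimately have "card ?T = card Y" "card ?T \<le> card (guards E q)"
    using Y(2) card_guards by linarith+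
  then show "\<And>g. g \<in> guards E q \<Longrightarrow> card (Y \<inter> guard_group g) \<le> 1"
    using card_guard_group_le_1[OF finY] H by simp
  from \<open>card ?T = card Y\<close> have "?T = Y" using finY by (intro card_subset_eq) auto
  then show "Y \<subseteq> guards E q \<union> sel" using guard_group_subset_guards_sel by blast
qed

lemma D_eq_free_region_chosen:
  assumes "finite Y" "Y \<subseteq> guards E q \<union> sel"
    and once: "\<And>g. g \<in> guards E q \<Longrightarrow> card (Y \<inter> guard_group g) \<le> 1"
    and budget: "int (card (D Y)) \<le> kval V E q"
  shows "card (chosen_vertices Y) = q" "card (chosen_edges Y) = q choose 2"
    "D Y = free_region (chosen_vertices Y) (chosen_edges Y)"
proof -
  let ?A = "chosen_vertices Y" and ?F = "chosen_edges Y"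
  have AF: "?A \<subseteq> V" "?F \<subseteq> E" by (auto simp: chosen_vertices_def chosen_edges_def)
  note le = card_chosen_le[OF assms(1) once]
  have "free_sel ?A ?F \<inter> Y = {}" by (auto simp: free_sel_def chosen_vertices_def chosen_edges_def)
  moreover have "Y \<inter> conns = {}" using assms(2) by (auto simp: guards_def connodes_def)
  ultimately have sub: "free_region ?A ?F \<subseteq> D Y" by (rule free_region_subset_D)
  have "kval V E q + (int q - int (card ?A)) + (int (q choose 2) - int (card ?F))
      \<le> int (card (free_region ?A ?F))"
    unfolding int_card_free_region[OF AF] using le
    by (intro add_mono) (simp_all add: mult_le_cancel_left1)
  also have "\<dots> \<le> int (card (D Y))" using card_mono[OF finite_D sub] by simp
  finally show A: "card ?A = q" and F: "card ?F = q choose 2" using le budget by linarith+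
  then have "card (D Y) \<le> card (free_region ?A ?F)"
    using int_card_free_region[OF AF] budget by simp
  then show "D Y = free_region ?A ?F" using sub finite_D card_seteq by blast
qed

lemma Val_nbrs_outside_chosen_gadgets_in_D:
  assumes "finite Y" "Y \<subseteq> guards E q \<union> sel"
    and once: "\<And>g. g \<in> guards E q \<Longrightarrow> card (Y \<inter> guard_group g) \<le> 1"
    and chosen: "u \<in> chosen_vertices Y" "e \<in> chosen_edges Y"
  shows "nbrs nodes adj (Val (col ` e) (col u) b)
      - (gadget (col ` e) (col u) b (XV u) \<union> gadget (col ` e) (col u) b (XE e)) \<subseteq> D Y"
proof
  fix w assume w: "w \<in> nbrs nodes adj (Val (col ` e) (col u) b)
      - (gadget (col ` e) (col u) b (XV u) \<union> gadget (col ` e) (col u) b (XE e))"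
  then obtain x' i where w': "w = Conn (col ` e) (col u) b x' i" "w \<in> conns" by (auto simp: nbrs_Val)
  then obtain v' where att: "(x', v') \<in> gad_attach V E col (col ` e) (col u)" by (auto simp: conn_iff)
  have "x' \<notin> Y"
  proof
    assume "x' \<in> Y"
    from att show False
      unfolding gad_attach_def
    proof (elim UnE CollectE exE conjE)
      fix v assume "(x', v') = (XV v, v)" "v \<in> V" "col v = col u"
      then have "v = u"
        using \<open>x' \<in> Y\<close> chosen(1) inj_on_chosen(1)[OF assms(1) once]
        unfolding chosen_vertices_def by (auto dest: inj_onD)
      then show False using w w' \<open>(x', v') = (XV v, v)\<close> by (auto simp: gadget_def)
    next
      fix e' v assume "(x', v') = (XE e', v)" "e' \<in> Ecd E col (col ` e)"
      then have "e' = e"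
        using \<open>x' \<in> Y\<close> chosen(2) inj_on_chosen(2)[OF assms(1) once]
        unfolding chosen_edges_def Ecd_def by (auto dest: inj_onD)
      then show False using w w' \<open>(x', v') = (XE e', v)\<close> by (auto simp: gadget_def)
    qed
  qed
  moreover have "w \<notin> Y" using w'(2) assms(2) by (auto simp: guards_def connodes_def)
  ultimately show "w \<in> D Y" using w' conn_in_D by blast
qed

lemma Val_in_D_if_inconsistent:
  assumes "finite Y" "Y \<subseteq> guards E q \<union> sel"
    and once: "\<And>g. g \<in> guards E q \<Longrightarrow> card (Y \<inter> guard_group g) \<le> 1"
    and chosen: "u \<in> chosen_vertices Y" "e \<in> chosen_edges Y" and x: "x \<in> e" "col x = col u" "x \<noteq> u"
  shows "Val (col ` e) (col u) (low x < low u) \<in> D Y"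
proof -
  define P c b where "P = col ` e" and "c = col u" and "b = (low x < low u)"
  let ?N = "nbrs nodes adj (Val P c b)"
  let ?R = "gadget P c b (XV u) \<union> gadget P c b (XE e)"
  have uV: "u \<in> V" and eE: "e \<in> E" using chosen by (auto simp: chosen_vertices_def chosen_edges_def)
  then have xV: "x \<in> V" using x(1) simple by blast
  have "c \<in> P" unfolding P_def c_def using x(1,2) by (metis image_eqI)
  then have Pcb: "(P, c, b) \<in> validx q"
    using colpairs_image_edge[OF eE] unfolding validx_iff P_def by simp
  have "?N - ?R \<subseteq> D Y"
    unfolding P_def c_def by (rule Val_nbrs_outside_chosen_gadgets_in_D[OF assms(1,2) once chosen])
  moreover have "thr (Val P c b) \<le> card (?N - ?R)"
  proof -
    have "(XV u, u) \<in> gad_attach V E col P c" "(XE e, x) \<in> gad_attach V E col P c"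
      using uV eE x unfolding P_def c_def by (auto simp: gad_attach_XV gad_attach_XE Ecd_def)
    then have "card (gadget P c b (XV u)) + card (gadget P c b (XE e))
        = gad_size (card V) low b (XV u) u + gad_size (card V) low b (XE e) x"
      by (simp add: card_gadget[OF Pcb])
    then have "card ?R \<le> gad_size (card V) low b (XV u) u + gad_size (card V) low b (XE e) x"
      using card_Un_le[of "gadget P c b (XV u)" "gadget P c b (XE e)"] by simp
    also have "\<dots> < 2 * card V" \<comment> \<open>since low x \<noteq> low u\<close>
      using low_inj low_range uV xV x(3) unfolding b_def gad_size_def highv_def inj_on_def
      by (cases "low x < low u") (force, force)
    finally have "card ?R < 2 * card V" .
    then show ?thesis using diff_card_le_card_Diff[of ?R ?N] finite_gadget by (simp add: thr_simps)
  qed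
  moreover have "Val P c b \<in> nodes - Y"
    using Pcb assms(2) in_nodes(4) by (auto simp: guards_def)
  ultimately have "Val P c b \<in> D Y"
    by (intro diffusion_if_active_nbrs[OF finite_nodes _ Diff_subset]) auto
  then show ?thesis unfolding P_def c_def b_def .
qed

lemma clique_if_guards_blocked:
  assumes Y: "Y \<subseteq> nodes" "card Y \<le> lval q" "int (card (D Y)) \<le> kval V E q"
    and blocked: "\<And>g. g \<in> guards E q \<Longrightarrow> Y \<inter> guard_group g \<noteq> {}"
  shows "\<exists>K \<subseteq> V. card K = q \<and> is_clique E K"
proof -
  let ?A = "chosen_vertices Y" and ?F = "chosen_edges Y"
  have finY: "finite Y" using Y(1) finite_nodes by (rule finite_subset)
  note once = guards_blocked_once(1)[OF Y(1,2) blocked]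
    and sub = guards_blocked_once(2)[OF Y(1,2) blocked]
  note chosen = D_eq_free_region_chosen[OF finY sub once Y(3)]
  note inj = inj_on_chosen[OF finY once]
  have consistent: "x = u" if "u \<in> ?A" "e \<in> ?F" "x \<in> e" "col x = col u" for u e x
  proof (rule ccontr)
    assume "x \<noteq> u"
    then have "Val (col ` e) (col u) (low x < low u) \<in> D Y"
      using Val_in_D_if_inconsistent[OF finY sub once that] by blast
    then show False using chosen(3) free_region_simps(6) by blast
  qed
  have "(`) col ` ?F = colpairs q"
    using inj(2) chosen(2) finite_colpairs colpairs_image_edge
    by (intro card_subset_eq) (auto simp: card_image card_colpairs chosen_edges_def)
  have "is_clique E ?A"
    unfolding is_clique_def
  proof (intro ballI impI)
    fix u w assume uw: "u \<in> ?A" "w \<in> ?A" "u \<noteq> w"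
    have "col u \<noteq> col w" using inj(1) uw by (auto dest: inj_onD)
    moreover have "col u \<in> {1..q}" "col w \<in> {1..q}" using uw col_range by (auto simp: chosen_vertices_def)
    ultimately have "{col u, col w} \<in> (`) col ` ?F"
      using \<open>(`) col ` ?F = colpairs q\<close> unfolding colpairs_def by blast
    then obtain e where e: "e \<in> ?F" "col ` e = {col u, col w}" by blast
    then have "col u \<in> col ` e" "col w \<in> col ` e" by auto
    then obtain x y where "x \<in> e" "col u = col x" "y \<in> e" "col w = col y" by blast
    then have "u \<in> e" "w \<in> e" using consistent uw(1,2) e(1) by metis+
    moreover have "e \<in> E" using e(1) by (simp add: chosen_edges_def)
    moreover from this obtain a a' where "e = {a, a'}" by (blast elim: edgeE)
    ultimately show "{u, w} \<in> E" using uw(3) by (auto simp: insert_commute)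
  qed
  moreover have "?A \<subseteq> V" by (auto simp: chosen_vertices_def)
  ultimately show ?thesis using chosen(1) by blast
qed

theorem clique_iff_small_diffusion:
  "(\<exists>K \<subseteq> V. card K = q \<and> is_clique E K) \<longleftrightarrow>
   (\<exists>Y \<subseteq> nodes. card Y \<le> lval q \<and> int (card (D Y)) \<le> kval V E q)"
proof
  assume "\<exists>K \<subseteq> V. card K = q \<and> is_clique E K"
  then show "\<exists>Y \<subseteq> nodes. card Y \<le> lval q \<and> int (card (D Y)) \<le> kval V E q"
    using blocking_set_if_clique by blast
next
  assume "\<exists>Y \<subseteq> nodes. card Y \<le> lval q \<and> int (card (D Y)) \<le> kval V E q"
  then obtain Y where Y: "Y \<subseteq> nodes" "card Y \<le> lval q" "int (card (D Y)) \<le> kval V E q" by blast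
  then show "\<exists>K \<subseteq> V. card K = q \<and> is_clique E K"
    using clique_if_guards_blocked guard_group_blocked by blast
qed

end

theorem lemma2:
  fixes V :: "'a set" and E :: "'a set set" and col :: "'a \<Rightarrow> nat"
    and q :: nat and low :: "'a \<Rightarrow> nat"
  assumes finV: "finite V"
    and simple: "E \<subseteq> {{u, v} | u v. u \<in> V \<and> v \<in> V \<and> u \<noteq> v}"
    and col_range: "\<forall>v\<in>V. col v \<in> {1..q}"
    and col_proper: "\<forall>u v. {u, v} \<in> E \<longrightarrow> col u \<noteq> col v"
    and low_inj: "inj_on low V"
    and low_range: "low ` V \<subseteq> {1..card V}"
  shows "(\<exists>K \<subseteq> V. card K = q \<and> is_clique E K) \<longleftrightarrow>
         (\<exists>Y \<subseteq> Gp_V V E col q low. card Y \<le> lval q \<and>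
            int (card (diffusion (Gp_V V E col q low) (Gp_adj V E col q low)
                                 (Gp_t V E col q low) Y)) \<le> kval V E q)"
  using assms by (intro clique_reduction.clique_iff_small_diffusion clique_reduction.intro)

end
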